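(* Let $\lambda>-1/2$, $\lambda\ne0$, $M,N\ge0$ integers, $a_0,\dots,a_M\in\mathbb{R}$, $a_{M+1}=a_{M+2}=0$, and $f_M(x)=\sum_{m=0}^M a_mC^{(\lambda)}_m(x)$. For $0\le n\le N$ and $y\in[-1,1]$ write $$\int_{-1}^{y}f_M(y-1-t)C^{(\lambda)}_n(t)\,\mathrm{d}t=\sum_{k=0}^{M+N+1}R^{(\lambda)}_{k,n}C^{(\lambda)}_k(y),$$ and set $R^{(\lambda)}_{k,-1}:=0$ for all $k$ and $R^{(\lambda)}_{M+N+2,n}:=0$. Then $$R^{(\lambda)}_{k,0}=\begin{cases}0,&k>M+1,\\[1mm] \dfrac{a_{k-1}}{2(k+\lambda-1)}-\dfrac{a_{k+1}}{2(k+\lambda+1)},&1\le k\le M+1,\\[2mm] \displaystyle\sum_{j=1}^{M+1}(-1)^{j+1}\frac{(2\lambda)_j}{j!}R^{(\lambda)}_{j,0},&k=0,\end{cases}$$ and for $0\le n\le N-1$ and $1\le k\le M+N$, $$R^{(\lambda)}_{k,n+1}=S^{(\lambda)}_nR^{(\lambda)}_{k,0}+R^{(\lambda)}_{k,n-1}+\frac{n+\lambda}{k+\lambda-1}R^{(\lambda)}_{k-1,n}-\frac{n+\lambda}{k+\lambda+1}R^{(\lambda)}_{k+1,n},$$ where $S^{(\lambda)}_n=\dfrac{2(-1)^{n+1}(\lambda+n)(2\lambda-1)_n}{(n+1)!}$.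
   Context: Gegenbauer polynomials $C^{(\lambda)}_n$ ($\lambda>-1/2$, $\lambda\ne0$) are defined by $C^{(\lambda)}_{-1}=0$, $C^{(\lambda)}_0=1$, $2(n+\lambda)xC^{(\lambda)}_n(x)=(n+1)C^{(\lambda)}_{n+1}(x)+(n+2\lambda-1)C^{(\lambda)}_{n-1}(x)$. $(a)_n$ is the Pochhammer symbol ($(a)_0=1$). The left-hand convolution is a polynomial of degree at most $M+n+1$, so $R^{(\lambda)}_{k,n}=0$ for $k>M+n+1$; $R^{(\lambda)}$ is the Gegenbauer convolution matrix of $f_M$. *)

theory Defs
  imports "HOL-Analysis.Analysis"
begin

text \<open>Gegenbauer polynomials via the three-term recurrence
  (n+1) C_{n+1}(x) = 2(n+lambda) x C_n(x) - (n + 2 lambda - 1) C_{n-1}(x), C_{-1} = 0, C_0 = 1.\<close>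
fun gegen_pair :: "real \<Rightarrow> nat \<Rightarrow> real \<Rightarrow> real \<times> real" where
  "gegen_pair lam 0 x = (0, 1)"
| "gegen_pair lam (Suc n) x =
     (let (cm1, c) = gegen_pair lam n x
      in (c, (2 * (real n + lam) * x * c - (real n + 2 * lam - 1) * cm1) / (real n + 1)))"

definition gegenbauer :: "real \<Rightarrow> nat \<Rightarrow> real \<Rightarrow> real" where
  "gegenbauer lam n x = snd (gegen_pair lam n x)"

definition gegen_series :: "real \<Rightarrow> (nat \<Rightarrow> real) \<Rightarrow> nat \<Rightarrow> real \<Rightarrow> real" where
  "gegen_series lam a M x = (\<Sum>m\<le>M. a m * gegenbauer lam m x)"

definition gegen_S :: "real \<Rightarrow> nat \<Rightarrow> real" where
  "gegen_S lam n = 2 * (-1) ^ (n + 1) * (lam + real n) * pochhammer (2 * lam - 1) n / fact (n + 1)"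

end

theory Submission
  imports Defs "HOL-Computational_Algebra.Polynomial"
begin

(* Write F_n(y) for the integral of f_M(y - 1 - t) C_n(t) over [-1, y]. Differentiating under the
   integral and integrating by parts gives F_n' = (f_M convolved with C_n') + C_n(-1) f_M.
   Applied to C_0 = 1 and to D_n = C_{n+1} - C_{n-1}, whose derivative is 2 (n + lambda) C_n and
   whose value at -1 is S_n, this yields F_0' = f_M and (F_{n+1} - F_{n-1})' = 2 (n + lambda) F_n
   + S_n f_M. All functions involved are polynomials, and sum_k c_k C_k is the derivative of
   sum_k (c_{k-1} / (2 (k + lambda - 1)) - c_{k+1} / (2 (k + lambda + 1))) C_k, so comparing the
   Gegenbauer coefficients of index k >= 1 (unique up to the constant term, as the leading
   coefficient of C_k is 2^k (lambda)_k / k! <> 0) gives the first column and the recurrence.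
   Finally R_{0,0} follows from F_0(-1) = 0 and C_k(-1) = (-1)^k (2 lambda)_k / k!. *)

lemma poly_eqI_infinite:
  fixes p q :: "'a::idom poly"
  assumes "infinite S" and "\<And>x. x \<in> S \<Longrightarrow> poly p x = poly q x"
  shows "p = q"
proof (rule ccontr)
  assume "p \<noteq> q"
  then have "finite {x. poly (p - q) x = 0}"
    by (intro poly_roots_finite) simp
  moreover have "S \<subseteq> {x. poly (p - q) x = 0}"
    using assms(2) by auto
  ultimately show False
    using assms(1) finite_subset by blast
qed

lemma pderiv_sum: "pderiv (sum f A) = (\<Sum>x\<in>A. pderiv (f x))"
  using higher_pderiv_sum[of 1] by simp

lemma gegenbauer_0 [simp]: "gegenbauer lam 0 x = 1"
  by (simp add: gegenbauer_def)

lemma gegenbauer_1 [simp]: "gegenbauer lam (Suc 0) x = 2 * lam * x"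
  by (simp add: gegenbauer_def)

lemma gegen_pair_eq: "gegen_pair lam (Suc n) x = (gegenbauer lam n x, gegenbauer lam (Suc n) x)"
  by (induction n) (simp_all add: gegenbauer_def split: prod.splits)

lemma gegenbauer_Suc_Suc:
  "gegenbauer lam (Suc (Suc n)) x =
     (2 * (real n + 1 + lam) * x * gegenbauer lam (Suc n) x - (real n + 2 * lam) * gegenbauer lam n x)
       / (real n + 2)"
proof -
  have "gegenbauer lam (Suc (Suc n)) x = snd (gegen_pair lam (Suc (Suc n)) x)"
    by (simp only: gegenbauer_def)
  also have "\<dots> = (2 * (real (Suc n) + lam) * x * gegenbauer lam (Suc n) x
      - (real (Suc n) + 2 * lam - 1) * gegenbauer lam n x) / (real (Suc n) + 1)"
    by (subst gegen_pair.simps(2), subst gegen_pair_eq) simp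
  finally show ?thesis by (simp add: algebra_simps)
qed

fun gegenbauer_poly :: "real \<Rightarrow> nat \<Rightarrow> real poly" where
  "gegenbauer_poly lam 0 = 1"
| "gegenbauer_poly lam (Suc 0) = [:0, 2 * lam:]"
| "gegenbauer_poly lam (Suc (Suc n)) =
     smult (1 / (real n + 2))
       ([:0, 2 * (real n + 1 + lam):] * gegenbauer_poly lam (Suc n)
        - smult (real n + 2 * lam) (gegenbauer_poly lam n))"

declare gegenbauer_poly.simps(3) [simp del]

lemma poly_gegenbauer_poly [simp]: "poly (gegenbauer_poly lam n) = gegenbauer lam n"
proof (induction lam n rule: gegenbauer_poly.induct)
  case (3 lam n)
  then show ?case by (simp add: fun_eq_iff gegenbauer_Suc_Suc gegenbauer_poly.simps(3) field_simps)
qed (simp_all add: fun_eq_iff)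

lemma degree_coeff_gegenbauer_poly:
  "degree (gegenbauer_poly lam n) \<le> n \<and>
   coeff (gegenbauer_poly lam n) n = 2 ^ n * pochhammer lam n / fact n"
proof (induction lam n rule: gegenbauer_poly.induct)
  case (3 lam n)
  let ?C = "gegenbauer_poly lam"
  have "degree ([:0, 2 * (real n + 1 + lam):] * ?C (Suc n)) \<le> Suc (Suc n)"
    using "3.IH"(1) degree_mult_le[of "[:0, 2 * (real n + 1 + lam):]" "?C (Suc n)"] by auto
  moreover have "degree (smult (real n + 2 * lam) (?C n)) \<le> Suc (Suc n)"
    using "3.IH"(2) by (simp add: le_SucI)
  ultimately have "degree (?C (Suc (Suc n))) \<le> Suc (Suc n)"
    by (simp add: gegenbauer_poly.simps(3) degree_diff_le)
  moreover have "coeff (?C n) (Suc (Suc n)) = 0"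
    using "3.IH"(2) by (simp add: coeff_eq_0)
  ultimately show ?case
    using "3.IH"(1) by (simp add: gegenbauer_poly.simps(3) pochhammer_Suc field_simps)
qed simp_all

lemma poly_pderiv_gegenbauer_poly_Suc_Suc:
  "(real n + 2) * poly (pderiv (gegenbauer_poly lam (Suc (Suc n)))) x =
     2 * (real n + 1 + lam)
       * (gegenbauer lam (Suc n) x + x * poly (pderiv (gegenbauer_poly lam (Suc n))) x)
     - (real n + 2 * lam) * poly (pderiv (gegenbauer_poly lam n)) x"
  by (simp add: gegenbauer_poly.simps(3) pderiv_mult pderiv_smult pderiv_diff pderiv_pCons
      field_simps)

lemma poly_pderiv_gegenbauer_poly_Suc_if_euler:
  assumes "x * poly (pderiv (gegenbauer_poly lam n)) x - poly (pderiv (gegenbauer_poly lam (n - 1))) x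
    = real n * gegenbauer lam n x"
  shows "poly (pderiv (gegenbauer_poly lam (Suc n))) x
    = 2 * (real n + lam) * gegenbauer lam n x + poly (pderiv (gegenbauer_poly lam (n - 1))) x"
proof (cases n)
  case (Suc m)
  have "x * poly (pderiv (gegenbauer_poly lam n)) x
      = poly (pderiv (gegenbauer_poly lam m)) x + real n * gegenbauer lam n x"
    using assms Suc by simp
  then have "(real m + 2) * poly (pderiv (gegenbauer_poly lam (Suc n))) x
      = (real m + 2) * (2 * (real n + lam) * gegenbauer lam n x + poly (pderiv (gegenbauer_poly lam m)) x)"
    using poly_pderiv_gegenbauer_poly_Suc_Suc[of m lam x] Suc by (simp add: algebra_simps)
  then show ?thesis
    using Suc by (simp add: add_nonneg_pos)
qed (simp add: pderiv_pCons)

lemma gegenbauer_poly_euler: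
  "x * poly (pderiv (gegenbauer_poly lam n)) x - poly (pderiv (gegenbauer_poly lam (n - 1))) x
    = real n * gegenbauer lam n x"
proof (induction lam n rule: gegenbauer_poly.induct)
  case (3 lam n)
  let ?d = "\<lambda>k. poly (pderiv (gegenbauer_poly lam k)) x" and ?c = "\<lambda>k. gegenbauer lam k x"
  have "?d (Suc (Suc n)) = 2 * (real n + 1 + lam) * ?c (Suc n) + ?d n"
    using poly_pderiv_gegenbauer_poly_Suc_if_euler[OF "3.IH"(1)] by (simp add: algebra_simps)
  moreover have "?d (Suc n) = 2 * (real n + lam) * ?c n + ?d (n - 1)"
    using poly_pderiv_gegenbauer_poly_Suc_if_euler[OF "3.IH"(2)] .
  ultimately show ?case
    using "3.IH"(2) gegenbauer_Suc_Suc[of lam n x] by (simp add: field_simps)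
qed (simp_all add: pderiv_pCons)

(* For n = 0 the truncated n - 1 gives C_0 instead of C_{-1} = 0; both have derivative 0. *)
lemma pderiv_gegenbauer_poly_Suc:
  "pderiv (gegenbauer_poly lam (Suc n))
    = smult (2 * (real n + lam)) (gegenbauer_poly lam n) + pderiv (gegenbauer_poly lam (n - 1))"
  using poly_pderiv_gegenbauer_poly_Suc_if_euler[OF gegenbauer_poly_euler]
  by (simp add: poly_eq_poly_eq_iff[symmetric] fun_eq_iff)

lemma fact_mult_gegenbauer_minus_one:
  "fact n * gegenbauer lam n (-1) = (-1) ^ n * pochhammer (2 * lam) n"
proof (induction lam n rule: gegenbauer_poly.induct)
  case (3 lam n)
  have "fact (Suc (Suc n)) * gegenbauer lam (Suc (Suc n)) (-1)
      = - 2 * (real n + 1 + lam) * (fact (Suc n) * gegenbauer lam (Suc n) (-1))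
        - (real n + 1) * (real n + 2 * lam) * (fact n * gegenbauer lam n (-1))"
    by (simp add: gegenbauer_Suc_Suc field_simps add_nonneg_pos)
  then show ?case
    unfolding "3.IH" by (simp add: pochhammer_Suc algebra_simps)
qed simp_all

lemma gegenbauer_minus_one: "gegenbauer lam n (-1) = (-1) ^ n * pochhammer (2 * lam) n / fact n"
  using fact_mult_gegenbauer_minus_one[of n lam] by (simp add: field_simps)

definition gegenbauer_poly_diff :: "real \<Rightarrow> nat \<Rightarrow> real poly" where
  "gegenbauer_poly_diff lam n =
     gegenbauer_poly lam (Suc n) - (if n = 0 then 0 else gegenbauer_poly lam (n - 1))"

lemma pderiv_gegenbauer_poly_diff:
  "pderiv (gegenbauer_poly_diff lam n) = smult (2 * (real n + lam)) (gegenbauer_poly lam n)"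
  by (cases n) (simp_all add: gegenbauer_poly_diff_def pderiv_diff pderiv_pCons pderiv_gegenbauer_poly_Suc)

lemma poly_gegenbauer_poly_diff_minus_one: "poly (gegenbauer_poly_diff lam n) (-1) = gegen_S lam n"
proof (cases n)
  case 0
  then show ?thesis by (simp add: gegenbauer_poly_diff_def gegen_S_def)
next
  case (Suc m)
  have "fact (Suc (Suc m)) * poly (gegenbauer_poly_diff lam n) (-1)
      = fact (Suc (Suc m)) * gegenbauer lam (Suc (Suc m)) (-1)
        - (real m + 2) * (real m + 1) * (fact m * gegenbauer lam m (-1))"
    by (simp add: Suc gegenbauer_poly_diff_def algebra_simps)
  also have "\<dots> = 2 * (-1) ^ m * (lam + real m + 1) * ((2 * lam - 1) * pochhammer (2 * lam) m)"
    unfolding fact_mult_gegenbauer_minus_one pochhammer_Suc by (simp add: algebra_simps)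
  also have "\<dots> = fact (Suc (Suc m)) * gegen_S lam n"
    by (simp add: Suc gegen_S_def pochhammer_rec[of "2 * lam - 1"] del: fact_Suc)
  finally show ?thesis
    by simp
qed

definition gegenbauer_series_poly :: "real \<Rightarrow> (nat \<Rightarrow> real) \<Rightarrow> nat \<Rightarrow> real poly" where
  "gegenbauer_series_poly lam c L = (\<Sum>k\<le>L. smult (c k) (gegenbauer_poly lam k))"

lemma poly_gegenbauer_series_poly [simp]:
  "poly (gegenbauer_series_poly lam c L) = gegen_series lam c L"
  by (simp add: fun_eq_iff gegenbauer_series_poly_def gegen_series_def poly_sum)

lemma gegenbauer_series_poly_eq_0D:
  assumes lam: "\<And>j. real j + lam \<noteq> 0"
    and "gegenbauer_series_poly lam c L = 0" and "k \<le> L"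
  shows "c k = 0"
  using assms(2,3)
proof (induction L)
  case 0
  then show ?case by (simp add: gegenbauer_series_poly_def)
next
  case (Suc L)
  have lower: "coeff (gegenbauer_poly lam k) (Suc L) = 0" if "k \<le> L" for k
    using degree_coeff_gegenbauer_poly[of lam k] that by (intro coeff_eq_0) linarith
  have "pochhammer lam (Suc L) \<noteq> 0"
    using lam by (auto simp: pochhammer_eq_0_iff add_eq_0_iff)
  then have "coeff (gegenbauer_poly lam (Suc L)) (Suc L) \<noteq> 0"
    using degree_coeff_gegenbauer_poly[of lam "Suc L"] by simp
  moreover have "coeff (gegenbauer_series_poly lam c (Suc L)) (Suc L)
      = c (Suc L) * coeff (gegenbauer_poly lam (Suc L)) (Suc L)"
    by (simp add: gegenbauer_series_poly_def coeff_sum lower)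
  ultimately have top: "c (Suc L) = 0"
    using Suc.prems(1) by simp
  then have "gegenbauer_series_poly lam c L = 0"
    using Suc.prems(1) by (simp add: gegenbauer_series_poly_def)
  then show ?case
    using Suc.IH Suc.prems(2) top le_Suc_eq by blast
qed

lemma gegenbauer_series_poly_diff:
  "gegenbauer_series_poly lam (\<lambda>k. c k - d k) L
    = gegenbauer_series_poly lam c L - gegenbauer_series_poly lam d L"
  by (simp add: gegenbauer_series_poly_def smult_diff_left sum_subtractf)

lemma gegenbauer_series_poly_add:
  "gegenbauer_series_poly lam (\<lambda>k. c k + d k) L
    = gegenbauer_series_poly lam c L + gegenbauer_series_poly lam d L"
  by (simp add: gegenbauer_series_poly_def smult_add_left sum.distrib)

lemma gegenbauer_series_poly_cmult:
  "gegenbauer_series_poly lam (\<lambda>k. a * c k) L = smult a (gegenbauer_series_poly lam c L)"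
  unfolding gegenbauer_series_poly_def by (induction L) (simp_all add: smult_add_right)

lemma gegenbauer_series_poly_Suc_fun_upd:
  "gegenbauer_series_poly lam c L = gegenbauer_series_poly lam (c(Suc L := 0)) (Suc L)"
  by (simp add: gegenbauer_series_poly_def)

lemma gegenbauer_series_poly_coeff_eqI:
  assumes lam: "\<And>j. real j + lam \<noteq> 0"
    and eq: "pderiv (gegenbauer_series_poly lam c L) = pderiv (gegenbauer_series_poly lam d L)"
    and "1 \<le> k" "k \<le> L"
  shows "c k = d k"
proof -
  define e where "e = coeff (gegenbauer_series_poly lam c L - gegenbauer_series_poly lam d L) 0"
  have "pderiv (gegenbauer_series_poly lam c L - gegenbauer_series_poly lam d L) = 0"
    using eq by (simp add: pderiv_diff)
  then have "gegenbauer_series_poly lam c L - gegenbauer_series_poly lam d L = [:e:]"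
    unfolding e_def pderiv_eq_0_iff by (rule degree_0_id[symmetric])
  moreover have "gegenbauer_series_poly lam (\<lambda>j. if j = 0 then e else 0) L = [:e:]"
    by (simp add: gegenbauer_series_poly_def sum.atMost_shift)
  ultimately have "gegenbauer_series_poly lam (\<lambda>j. c j - d j - (if j = 0 then e else 0)) L = 0"
    by (simp add: gegenbauer_series_poly_diff)
  then have "c k - d k - (if k = 0 then e else 0) = 0"
    using gegenbauer_series_poly_eq_0D[OF lam] \<open>k \<le> L\<close> by blast
  then show ?thesis
    using \<open>1 \<le> k\<close> by simp
qed

definition gegenbauer_antideriv_coeffs :: "real \<Rightarrow> (nat \<Rightarrow> real) \<Rightarrow> nat \<Rightarrow> real" where
  "gegenbauer_antideriv_coeffs lam c k =
     (if k = 0 then 0 else c (k - 1) / (2 * (real k + lam - 1))) - c (k + 1) / (2 * (real k + lam + 1))"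

lemma gegenbauer_series_poly_antideriv_coeffs:
  "gegenbauer_series_poly lam (gegenbauer_antideriv_coeffs lam c) (Suc L)
    = (\<Sum>j\<le>L. smult (c j / (2 * (real j + lam))) (gegenbauer_poly_diff lam j))
      - smult (c (L + 1) / (2 * (real L + 1 + lam))) (gegenbauer_poly lam L)
      - smult (c (L + 2) / (2 * (real L + 2 + lam))) (gegenbauer_poly lam (Suc L))"
proof (induction L)
  case 0
  then show ?case
    by (simp add: gegenbauer_series_poly_def gegenbauer_antideriv_coeffs_def gegenbauer_poly_diff_def
        algebra_simps)
next
  case (Suc L)
  have step: "gegenbauer_series_poly lam (gegenbauer_antideriv_coeffs lam c) (Suc (Suc L))
      = gegenbauer_series_poly lam (gegenbauer_antideriv_coeffs lam c) (Suc L)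
        + smult (gegenbauer_antideriv_coeffs lam c (Suc (Suc L))) (gegenbauer_poly lam (Suc (Suc L)))"
    by (simp add: gegenbauer_series_poly_def)
  have top: "gegenbauer_antideriv_coeffs lam c (Suc (Suc L))
      = c (Suc L) / (2 * (real L + 1 + lam)) - c (Suc (Suc (Suc L))) / (2 * (real L + 3 + lam))"
    by (simp add: gegenbauer_antideriv_coeffs_def algebra_simps)
  have diff: "gegenbauer_poly_diff lam (Suc L) = gegenbauer_poly lam (Suc (Suc L)) - gegenbauer_poly lam L"
    by (simp add: gegenbauer_poly_diff_def)
  show ?case
    unfolding step Suc.IH top by (simp add: diff smult_diff_left smult_diff_right algebra_simps)
qed

lemma pderiv_gegenbauer_series_poly_antideriv_coeffs:
  assumes lam: "\<And>j. real j + lam \<noteq> 0" and "c (Suc L) = 0" "c (Suc (Suc L)) = 0"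
  shows "pderiv (gegenbauer_series_poly lam (gegenbauer_antideriv_coeffs lam c) (Suc L))
    = gegenbauer_series_poly lam c L"
proof -
  have "smult (c j / (2 * (real j + lam))) (pderiv (gegenbauer_poly_diff lam j))
      = smult (c j) (gegenbauer_poly lam j)" for j
    using lam[of j] by (simp add: pderiv_gegenbauer_poly_diff)
  then show ?thesis
    unfolding gegenbauer_series_poly_antideriv_coeffs
    using assms(2,3) by (simp add: pderiv_sum pderiv_smult gegenbauer_series_poly_def)
qed

definition lconv :: "real poly \<Rightarrow> real poly \<Rightarrow> real \<Rightarrow> real" where
  "lconv p q y = integral {-1..y} (\<lambda>t. poly p (y - 1 - t) * poly q t)"

lemma lconv_integrable:
  fixes p q :: "real poly"
  shows "(\<lambda>t. poly p (y - 1 - t) * poly q t) integrable_on {a..b}"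
  by (rule integrable_continuous_real) (intro continuous_intros)

lemma lconv_add_left: "lconv (p1 + p2) q y = lconv p1 q y + lconv p2 q y"
  unfolding lconv_def by (simp add: distrib_right integral_add lconv_integrable)

lemma lconv_diff_right: "lconv p (q1 - q2) y = lconv p q1 y - lconv p q2 y"
  unfolding lconv_def by (simp add: right_diff_distrib integral_diff lconv_integrable)

lemma lconv_smult_right: "lconv p (smult c q) y = c * lconv p q y"
  unfolding lconv_def by (simp add: mult.left_commute)

lemma lconv_0_right [simp]: "lconv p 0 y = 0"
  by (simp add: lconv_def)

lemma lconv_minus_one [simp]: "lconv p q (-1) = 0"
  by (simp add: lconv_def)

lemma lconv_1_left: "lconv 1 q = (\<lambda>y. integral {-1..y} (poly q))"
  by (simp add: fun_eq_iff lconv_def)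

lemma lconv_pCons_left:
  "lconv (pCons c p) q y = c * lconv 1 q y + y * lconv p q y - lconv p ([:1, 1:] * q) y"
proof -
  have "lconv (pCons 0 p) q y = y * lconv p q y - lconv p ([:1, 1:] * q) y"
  proof -
    have eq: "(\<lambda>t. poly (pCons 0 p) (y - 1 - t) * poly q t)
        = (\<lambda>t. y * (poly p (y - 1 - t) * poly q t) - poly p (y - 1 - t) * poly ([:1, 1:] * q) t)"
      by (auto simp: algebra_simps)
    have "(\<lambda>t. y * (poly p (y - 1 - t) * poly q t)) integrable_on {-1..y}"
      by (rule integrable_continuous_real) (intro continuous_intros)
    from integral_diff[OF this lconv_integrable[of p y "[:1, 1:] * q"]] show ?thesis
      unfolding lconv_def eq by simp
  qed
  moreover have "lconv [:c:] q y = c * lconv 1 q y"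
    by (simp add: lconv_def)
  ultimately show ?thesis
    using lconv_add_left[of "[:c:]" "pCons 0 p" q y] by simp
qed

lemma has_real_derivative_integral_poly:
  assumes "a < y"
  shows "((\<lambda>x. integral {a..x} (poly q)) has_real_derivative poly q y) (at y)"
proof -
  have "((\<lambda>x. integral {a..x} (poly q)) has_real_derivative poly q y) (at y within {a..y + 1})"
    using assms by (intro integral_has_real_derivative continuous_intros) auto
  then show ?thesis
    using assms by (simp add: at_within_Icc_at)
qed

lemma has_real_derivative_lconv_pderiv_left:
  assumes "-1 < y"
  shows "(lconv p q has_real_derivative poly p (-1) * poly q y + lconv (pderiv p) q y) (at y)"
proof (induction p arbitrary: q rule: pCons_induct)
  case 0
  have "lconv 0 q = (\<lambda>_. 0)"
    by (simp add: fun_eq_iff lconv_def)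
  then show ?case
    by simp
next
  case (pCons c p)
  let ?q1 = "[:1, 1:] * q"
  have "(lconv 1 q has_real_derivative poly q y) (at y)"
    unfolding lconv_1_left by (rule has_real_derivative_integral_poly[OF assms])
  then have D: "((\<lambda>y. c * lconv 1 q y + y * lconv p q y - lconv p ?q1 y) has_real_derivative
      c * poly q y + (1 * lconv p q y + (poly p (-1) * poly q y + lconv (pderiv p) q y) * y)
      - (poly p (-1) * poly ?q1 y + lconv (pderiv p) ?q1 y)) (at y)"
    by (intro DERIV_diff DERIV_add DERIV_cmult DERIV_mult DERIV_ident pCons.IH)
  have "lconv (pderiv (pCons c p)) q y = lconv p q y + y * lconv (pderiv p) q y - lconv (pderiv p) ?q1 y"
    by (simp add: pderiv_pCons lconv_add_left lconv_pCons_left)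
  then have "c * poly q y + (1 * lconv p q y + (poly p (-1) * poly q y + lconv (pderiv p) q y) * y)
      - (poly p (-1) * poly ?q1 y + lconv (pderiv p) ?q1 y)
      = poly (pCons c p) (-1) * poly q y + lconv (pderiv (pCons c p)) q y"
    by (simp add: algebra_simps)
  moreover have "lconv (pCons c p) q = (\<lambda>y. c * lconv 1 q y + y * lconv p q y - lconv p ?q1 y)"
    by (simp add: fun_eq_iff lconv_pCons_left)
  ultimately show ?case
    using DERIV_cong[OF D] by simp
qed

lemma lconv_pderiv_left:
  assumes "-1 \<le> y"
  shows "lconv (pderiv p) q y = lconv p (pderiv q) y + poly p y * poly q (-1) - poly p (-1) * poly q y"
proof -
  have "((\<lambda>t. - (poly p (y - 1 - t) * poly q t)) has_vector_derivative
      poly (pderiv p) (y - 1 - t) * poly q t - poly p (y - 1 - t) * poly (pderiv q) t)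
      (at t within {-1..y})" for t
    unfolding has_real_derivative_iff_has_vector_derivative[symmetric]
    by (auto intro!: derivative_eq_intros DERIV_chain2[OF poly_DERIV] simp: algebra_simps)
  from fundamental_theorem_of_calculus[OF assms this]
  have "integral {-1..y}
        (\<lambda>t. poly (pderiv p) (y - 1 - t) * poly q t - poly p (y - 1 - t) * poly (pderiv q) t)
      = poly p y * poly q (-1) - poly p (-1) * poly q y"
    by (simp add: integral_unique algebra_simps)
  then show ?thesis
    unfolding lconv_def by (simp add: integral_diff lconv_integrable)
qed

lemma has_real_derivative_lconv:
  assumes "-1 < y"
  shows "(lconv p q has_real_derivative lconv p (pderiv q) y + poly q (-1) * poly p y) (at y)"
  using has_real_derivative_lconv_pderiv_left[OF assms, of p q] lconv_pderiv_left[of y p q] assms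
  by (simp add: algebra_simps)

lemma pderiv_eqI_on_interval:
  fixes P Q :: "real poly"
  assumes "a < b"
    and agree: "\<And>y. y \<in> {a..b} \<Longrightarrow> g y = poly P y"
    and deriv: "\<And>y. y \<in> {a<..<b} \<Longrightarrow> (g has_real_derivative poly Q y) (at y)"
  shows "pderiv P = Q"
proof (rule poly_eqI_infinite)
  show "infinite {a<..<b}"
    using \<open>a < b\<close> by simp
  fix y assume y: "y \<in> {a<..<b}"
  have "(poly P has_real_derivative poly Q y) (at y)"
    using deriv[OF y] by (rule has_field_derivative_transform_within_open[of _ _ _ "{a<..<b}"])
      (use y agree in auto)
  then show "poly (pderiv P) y = poly Q y"
    using poly_DERIV[of P y] DERIV_unique by blast
qed

lemma pderiv_eq_of_lconv:
  assumes "\<And>y. y \<in> {-1..1} \<Longrightarrow> lconv f q y = poly P y"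
    and "\<And>y. y \<in> {-1..1} \<Longrightarrow> lconv f (pderiv q) y = poly Q y"
  shows "pderiv P = Q + smult (poly q (-1)) f"
proof (rule pderiv_eqI_on_interval[of "-1" 1 "lconv f q"])
  fix y :: real
  assume y: "y \<in> {-1<..<1}"
  then have "lconv f (pderiv q) y + poly q (-1) * poly f y = poly (Q + smult (poly q (-1)) f) y"
    using assms(2) by simp
  then show "(lconv f q has_real_derivative poly (Q + smult (poly q (-1)) f) y) (at y)"
    using has_real_derivative_lconv[of y f q] y by simp
qed (use assms(1) in auto)

lemma gegenbauer_antideriv_coeffs_truncate:
  assumes "a (M + 1) = 0" "a (M + 2) = 0"
  shows "gegenbauer_antideriv_coeffs lam (\<lambda>j. if j \<le> M then a j else 0) k
    = (if k \<le> M + 1 then gegenbauer_antideriv_coeffs lam a k else 0)"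
proof -
  have "k + 1 \<le> M \<or> k + 1 = M + 1 \<or> k + 1 = M + 2 \<or> M + 1 < k"
    by arith
  then show ?thesis
    using assms by (auto simp: gegenbauer_antideriv_coeffs_def)
qed

lemma lconv_1_gegenbauer_coeffs:
  assumes lam: "\<And>j. real j + lam \<noteq> 0"
    and a_zero: "a (M + 1) = 0" "a (M + 2) = 0" and "M < K"
    and expansion: "\<And>y. y \<in> {-1..1} \<Longrightarrow>
      lconv (gegenbauer_series_poly lam a M) 1 y = gegen_series lam r K y"
    and "1 \<le> k" "k \<le> K"
  shows "r k = (if k \<le> M + 1 then gegenbauer_antideriv_coeffs lam a k else 0)"
proof -
  define a' where "a' j = (if j \<le> M then a j else 0)" for j
  let ?A = "gegenbauer_antideriv_coeffs lam a'"
  have "pderiv (gegenbauer_series_poly lam r K) = gegenbauer_series_poly lam a M"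
    using pderiv_eq_of_lconv[of "gegenbauer_series_poly lam a M" 1 _ 0] expansion by simp
  also have "\<dots> = gegenbauer_series_poly lam a' M"
    by (simp add: gegenbauer_series_poly_def a'_def)
  also have "\<dots> = pderiv (gegenbauer_series_poly lam ?A (Suc M))"
    by (rule pderiv_gegenbauer_series_poly_antideriv_coeffs[symmetric]) (simp_all add: lam a'_def)
  also have "gegenbauer_series_poly lam ?A (Suc M) = gegenbauer_series_poly lam ?A K"
    unfolding gegenbauer_series_poly_def using \<open>M < K\<close>
    by (intro sum.mono_neutral_left) (auto simp: gegenbauer_antideriv_coeffs_def a'_def)
  finally have "r k = ?A k"
    using gegenbauer_series_poly_coeff_eqI[OF lam] \<open>1 \<le> k\<close> \<open>k \<le> K\<close> by blast
  then show ?thesis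
    unfolding a'_def gegenbauer_antideriv_coeffs_truncate[OF a_zero] .
qed

lemma pderiv_eq_of_lconv_gegenbauer_poly_diff:
  assumes "\<And>y. y \<in> {-1..1} \<Longrightarrow> lconv f (gegenbauer_poly_diff lam n) y = poly P y"
    and "\<And>y. y \<in> {-1..1} \<Longrightarrow> lconv f (gegenbauer_poly lam n) y = poly Q y"
  shows "pderiv P = smult (2 * (real n + lam)) Q + smult (gegen_S lam n) f"
  using pderiv_eq_of_lconv[of f "gegenbauer_poly_diff lam n" P "smult (2 * (real n + lam)) Q"] assms
  by (simp add: pderiv_gegenbauer_poly_diff lconv_smult_right poly_gegenbauer_poly_diff_minus_one)

lemma lconv_gegenbauer_coeffs_rec:
  assumes lam: "\<And>j. real j + lam \<noteq> 0"
    and expansion: "\<And>n y. n \<le> N \<Longrightarrow> y \<in> {-1..1} \<Longrightarrow>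
      lconv f (gegenbauer_poly lam n) y = gegen_series lam (\<lambda>k. R k n) K y"
    and "n + 1 \<le> N" "1 \<le> k" "k < K"
  shows "R k (n + 1) = gegen_S lam n * R k 0 + (if n = 0 then 0 else R k (n - 1))
    + (real n + lam) / (real k + lam - 1) * R (k - 1) n - (real n + lam) / (real k + lam + 1) * R (k + 1) n"
proof -
  let ?G = "gegenbauer_series_poly lam" and ?R = "\<lambda>n k. R k n"
  let ?P = "\<lambda>k. if n = 0 then 0 else R k (n - 1)"
  define w where "w = real n + lam"
  define c where "c j = (if j \<le> K then 2 * w * R j n else 0)" for j
  have f: "pderiv (?G (?R 0) K) = f"
    using pderiv_eq_of_lconv[of f 1 _ 0] expansion[of 0] by simp
  have "pderiv (?G (?R (n + 1)) K - ?G ?P K) = smult (2 * w) (?G (?R n) K) + smult (gegen_S lam n) f"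
    unfolding w_def
  proof (rule pderiv_eq_of_lconv_gegenbauer_poly_diff)
    fix y :: real
    assume y: "y \<in> {-1..1}"
    have "lconv f (if n = 0 then 0 else gegenbauer_poly lam (n - 1)) y = gegen_series lam ?P K y"
      using expansion[OF _ y, of "n - 1"] \<open>n + 1 \<le> N\<close> by (auto simp: gegen_series_def)
    then show "lconv f (gegenbauer_poly_diff lam n) y = poly (?G (?R (n + 1)) K - ?G ?P K) y"
      using expansion[OF _ y, of "n + 1"] \<open>n + 1 \<le> N\<close>
      by (simp add: gegenbauer_poly_diff_def lconv_diff_right)
    show "lconv f (gegenbauer_poly lam n) y = poly (?G (?R n) K) y"
      using expansion[OF _ y, of n] \<open>n + 1 \<le> N\<close> by simp
  qed
  also have "smult (2 * w) (?G (?R n) K) = ?G c K"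
    unfolding gegenbauer_series_poly_cmult[symmetric] unfolding gegenbauer_series_poly_def c_def
    by (intro sum.cong) auto
  also have "\<dots> = pderiv (?G (gegenbauer_antideriv_coeffs lam c) (Suc K))"
    by (rule pderiv_gegenbauer_series_poly_antideriv_coeffs[symmetric]) (simp_all add: lam c_def)
  finally have "pderiv (?G ((?R (n + 1))(Suc K := 0)) (Suc K)) = pderiv (?G (\<lambda>j. (?P(Suc K := 0)) j
      + gegen_S lam n * ((?R 0)(Suc K := 0)) j + gegenbauer_antideriv_coeffs lam c j) (Suc K))"
    unfolding gegenbauer_series_poly_add gegenbauer_series_poly_cmult
      gegenbauer_series_poly_Suc_fun_upd[symmetric] f[symmetric]
    by (simp add: pderiv_add pderiv_diff pderiv_smult algebra_simps)
  then have "R k (n + 1) = ?P k + gegen_S lam n * R k 0 + gegenbauer_antideriv_coeffs lam c k"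
    using gegenbauer_series_poly_coeff_eqI[OF lam] \<open>1 \<le> k\<close> \<open>k < K\<close> by fastforce
  also have "gegenbauer_antideriv_coeffs lam c k
      = 2 * w * R (k - 1) n / (2 * (real k + lam - 1)) - 2 * w * R (k + 1) n / (2 * (real k + lam + 1))"
    using \<open>1 \<le> k\<close> \<open>k < K\<close> by (simp add: gegenbauer_antideriv_coeffs_def c_def le_diff_conv)
  also have "\<dots> = w / (real k + lam - 1) * R (k - 1) n - w / (real k + lam + 1) * R (k + 1) n"
    by (simp only: mult.assoc mult_divide_mult_cancel_left_if) simp
  finally show ?thesis
    by (simp add: w_def)
qed

lemma gegen_series_minus_one_eq_0D:
  assumes "gegen_series lam r K (-1) = 0"
  shows "r 0 = (\<Sum>j = 1..K. (-1) ^ (j + 1) * pochhammer (2 * lam) j / fact j * r j)"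
proof -
  have "{..K} = insert 0 {1..K}"
    by auto
  then have "r 0 + (\<Sum>j = 1..K. (-1) ^ j * pochhammer (2 * lam) j / fact j * r j) = 0"
    using assms by (simp add: gegen_series_def gegenbauer_minus_one mult.commute)
  moreover have "(\<Sum>j = 1..K. (-1) ^ (j + 1) * pochhammer (2 * lam) j / fact j * r j)
      = - (\<Sum>j = 1..K. (-1) ^ j * pochhammer (2 * lam) j / fact j * r j)"
    by (simp add: sum_negf[symmetric])
  ultimately show ?thesis
    by linarith
qed

theorem theorem4p3:
  fixes lam :: real and M N :: nat and a :: "nat \<Rightarrow> real" and R :: "nat \<Rightarrow> nat \<Rightarrow> real"
  assumes lam_gt: "lam > -1/2" and lam_ne: "lam \<noteq> 0"
    and a_zero: "a (M + 1) = 0" "a (M + 2) = 0"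
    and expansion: "\<And>n y. n \<le> N \<Longrightarrow> y \<in> {-1..1} \<Longrightarrow>
        integral {-1..y} (\<lambda>t. gegen_series lam a M (y - 1 - t) * gegenbauer lam n t)
          = (\<Sum>k\<le>M + N + 1. R k n * gegenbauer lam k y)"
    and R_top: "\<And>n. R (M + N + 2) n = 0"
  shows "(\<forall>k. M + 1 < k \<and> k \<le> M + N + 2 \<longrightarrow> R k 0 = 0)
    \<and> (\<forall>k. 1 \<le> k \<and> k \<le> M + 1 \<longrightarrow>
          R k 0 = a (k - 1) / (2 * (real k + lam - 1)) - a (k + 1) / (2 * (real k + lam + 1)))
    \<and> R 0 0 = (\<Sum>j = 1..M + 1. (-1) ^ (j + 1) * pochhammer (2 * lam) j / fact j * R j 0)
    \<and> (\<forall>n k. n + 1 \<le> N \<and> 1 \<le> k \<and> k \<le> M + N \<longrightarrow>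
          R k (n + 1) = gegen_S lam n * R k 0 + (if n = 0 then 0 else R k (n - 1))
             + (real n + lam) / (real k + lam - 1) * R (k - 1) n
             - (real n + lam) / (real k + lam + 1) * R (k + 1) n)"
proof -
  have lam: "real j + lam \<noteq> 0" for j
    using lam_gt lam_ne by (cases j) auto
  define f where "f = gegenbauer_series_poly lam a M"
  have expansion': "lconv f (gegenbauer_poly lam n) y = gegen_series lam (\<lambda>k. R k n) (M + N + 1) y"
    if "n \<le> N" "y \<in> {-1..1}" for n y
    using expansion[OF that] by (simp add: f_def lconv_def gegen_series_def)
  have col0: "R k 0 = (if k \<le> M + 1 then gegenbauer_antideriv_coeffs lam a k else 0)"
    if "1 \<le> k" "k \<le> M + N + 1" for k
    using lconv_1_gegenbauer_coeffs[OF lam a_zero, of "M + N + 1" "\<lambda>k. R k 0"] expansion'[of 0] that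
    by (simp add: f_def)
  have col0_zero: "\<forall>k. M + 1 < k \<and> k \<le> M + N + 2 \<longrightarrow> R k 0 = 0"
    using col0 R_top by (auto simp: le_Suc_eq)
  have "R 0 0 = (\<Sum>j = 1..M + N + 1. (-1) ^ (j + 1) * pochhammer (2 * lam) j / fact j * R j 0)"
    using expansion'[of 0 "-1"] by (intro gegen_series_minus_one_eq_0D) simp
  also have "\<dots> = (\<Sum>j = 1..M + 1. (-1) ^ (j + 1) * pochhammer (2 * lam) j / fact j * R j 0)"
    using col0_zero by (intro sum.mono_neutral_right) auto
  finally show ?thesis
    using col0_zero col0 lconv_gegenbauer_coeffs_rec[OF lam expansion']
    by (auto simp: gegenbauer_antideriv_coeffs_def)
qed

end
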